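(* Let $\mathcal{X}$ be a separable infinite-dimensional complex Banach space, $T\in\mathcal{B}(\mathcal{X})$, and $\mathcal{M}$ a nontrivial closed subspace of $\mathcal{X}$. If $T$ is $\mathcal{M}$-disk transitive, then $T$ is $\mathcal{M}$-diskcyclic.
   Context: $\mathbb{N}=\{0,1,2,\dots\}$, $\mathbb{D}=\{\alpha\in\mathbb{C}:|\alpha|\le1\}$. $T$ is $\mathcal{M}$-disk transitive if for any two nonempty relatively open sets $U,V$ in $\mathcal{M}$ there exist $n\in\mathbb{N}$ and $\alpha\in\mathbb{C}$ with $|\alpha|\ge1$ such that $T^{-n}(\alpha U)\cap V$ (with $T^{-n}(A)=\{x:T^nx\in A\}$) contains a nonempty relatively open subset of $\mathcal{M}$. $T$ is $\mathcal{M}$-diskcyclic if there is $x\in\mathcal{X}$ with $\{\alpha T^nx:\alpha\in\mathbb{D},n\in\mathbb{N}\}\cap\mathcal{M}$ dense in $\mathcal{M}$. *)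

theory Defs
  imports "HOL-Analysis.Analysis"
begin

text \<open>The distribution has no class of complex vector spaces, so a complex Banach space
is modelled as a real Banach space together with a complex scalar multiplication sc
that extends the real one and is compatible with the norm.\<close>

definition complex_scaling :: "(complex \<Rightarrow> 'a::real_normed_vector \<Rightarrow> 'a) \<Rightarrow> bool" where
  "complex_scaling sc \<longleftrightarrow>
     (\<forall>a b x. sc a (sc b x) = sc (a * b) x) \<and>
     (\<forall>x. sc 1 x = x) \<and>
     (\<forall>a x y. sc a (x + y) = sc a x + sc a y) \<and>
     (\<forall>a b x. sc (a + b) x = sc a x + sc b x) \<and>
     (\<forall>r x. sc (complex_of_real r) x = r *\<^sub>R x) \<and>
     (\<forall>a x. norm (sc a x) = cmod a * norm x)"

definition cspan :: "(complex \<Rightarrow> 'a::real_normed_vector \<Rightarrow> 'a) \<Rightarrow> 'a set \<Rightarrow> 'a set" where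
  "cspan sc B = {sum (\<lambda>b. sc (c b) b) F | F c. finite F \<and> F \<subseteq> B}"

definition infinite_dimensional_c :: "(complex \<Rightarrow> 'a::real_normed_vector \<Rightarrow> 'a) \<Rightarrow> bool" where
  "infinite_dimensional_c sc \<longleftrightarrow> \<not> (\<exists>B. finite B \<and> cspan sc B = UNIV)"

definition separable_type :: "'a::metric_space itself \<Rightarrow> bool" where
  "separable_type _ \<longleftrightarrow> (\<exists>D::'a set. countable D \<and> closure D = UNIV)"

definition bounded_clinear :: "(complex \<Rightarrow> 'a::real_normed_vector \<Rightarrow> 'a) \<Rightarrow> ('a \<Rightarrow> 'a) \<Rightarrow> bool" where
  "bounded_clinear sc T \<longleftrightarrow> bounded_linear T \<and> (\<forall>c x. T (sc c x) = sc c (T x))"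

definition closed_csubspace :: "(complex \<Rightarrow> 'a::real_normed_vector \<Rightarrow> 'a) \<Rightarrow> 'a set \<Rightarrow> bool" where
  "closed_csubspace sc M \<longleftrightarrow> closed M \<and> 0 \<in> M \<and> (\<forall>x\<in>M. \<forall>y\<in>M. x + y \<in> M) \<and>
     (\<forall>c. \<forall>x\<in>M. sc c x \<in> M)"

definition M_disk_transitive ::
  "(complex \<Rightarrow> 'a::real_normed_vector \<Rightarrow> 'a) \<Rightarrow> 'a set \<Rightarrow> ('a \<Rightarrow> 'a) \<Rightarrow> bool" where
  "M_disk_transitive sc M T \<longleftrightarrow>
     (\<forall>U V. openin (top_of_set M) U \<and> U \<noteq> {} \<and> openin (top_of_set M) V \<and> V \<noteq> {} \<longrightarrow>
        (\<exists>n::nat. \<exists>\<alpha>::complex. cmod \<alpha> \<ge> 1 \<and>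
           (\<exists>W. openin (top_of_set M) W \<and> W \<noteq> {} \<and>
                W \<subseteq> (T ^^ n) -` ((\<lambda>x. sc \<alpha> x) ` U) \<inter> V)))"

definition M_diskcyclic ::
  "(complex \<Rightarrow> 'a::real_normed_vector \<Rightarrow> 'a) \<Rightarrow> 'a set \<Rightarrow> ('a \<Rightarrow> 'a) \<Rightarrow> bool" where
  "M_diskcyclic sc M T \<longleftrightarrow>
     (\<exists>x. M \<subseteq> closure ({sc \<alpha> ((T ^^ n) x) | \<alpha> n. cmod \<alpha> \<le> 1} \<inter> M))"

end

theory Submission
  imports Defs
begin

text \<open>A Birkhoff-type Baire argument. For each member U of a countable base of M, the
points of M some scaled iterate of which lands in \<open>\<alpha> U\<close> with \<open>|\<alpha>| \<ge> 1\<close> form a relatively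
open set, and disk transitivity makes it dense. M is closed in a Banach space, hence
completely metrizable, so by Baire's theorem some x \<in> M lies in all of them. Then every
nonempty open subset of M contains a point \<open>\<alpha>\<^sup>-\<^sup>1 T\<^sup>n x\<close> with \<open>|\<alpha>\<^sup>-\<^sup>1| \<le> 1\<close>.\<close>

lemma second_countable_euclidean_if_countable_dense:
  fixes D :: "'a::metric_space set"
  assumes "countable D" and "closure D = UNIV"
  shows "second_countable (euclidean :: 'a topology)"
  unfolding second_countable_def
proof (intro exI conjI ballI allI impI)
  let ?\<B> = "(\<lambda>(d, r). ball d r) ` (D \<times> \<rat>)"
  show "countable ?\<B>"
    by (intro countable_image countable_SIGMA assms(1) countable_rat)
  show "openin euclidean V" if "V \<in> ?\<B>" for V
    using that by auto
  fix U and x :: 'a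
  assume "openin euclidean U \<and> x \<in> U"
  then obtain e where e: "e > 0" "ball x e \<subseteq> U"
    by (auto simp: open_contains_ball)
  have "e/3 > 0" "x \<in> closure D"
    using e(1) assms(2) by auto
  then obtain d where d: "d \<in> D" "dist d x < e/3"
    unfolding closure_approachable by blast
  obtain r where r: "r \<in> \<rat>" "e/3 < r" "r < e/2"
    using Rats_dense_in_real[of "e/3" "e/2"] e(1) by auto
  have "ball d r \<subseteq> ball x e"
  proof
    fix y assume "y \<in> ball d r"
    then have "dist x y \<le> dist x d + dist d y" "dist d y < r"
      by (auto intro: dist_triangle)
    then show "y \<in> ball x e"
      using d r by (simp add: dist_commute)
  qed
  moreover have "x \<in> ball d r"
    using d r by (simp add: dist_commute)
  ultimately show "\<exists>V\<in>?\<B>. x \<in> V \<and> V \<subseteq> U"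
    using d r e(2) by blast
qed

text \<open>\<open>P x U\<close> reads ``x reaches U''. The reaching points of U contain a dense open set,
so by Baire some point reaches every member of a countable base, hence every open set.\<close>

lemma Baire_point_reaching_all_open:
  assumes complete: "completely_metrizable_space X"
    and countable_base: "second_countable X"
    and nonempty: "topspace X \<noteq> {}"
    and mono: "\<And>x U U'. P x U \<Longrightarrow> U \<subseteq> U' \<Longrightarrow> P x U'"
    and reach: "\<And>U V. openin X U \<Longrightarrow> U \<noteq> {} \<Longrightarrow> openin X V \<Longrightarrow> V \<noteq> {} \<Longrightarrow>
                  \<exists>W. openin X W \<and> W \<noteq> {} \<and> W \<subseteq> V \<and> (\<forall>x\<in>W. P x U)"
  shows "\<exists>x\<in>topspace X. \<forall>U. openin X U \<and> U \<noteq> {} \<longrightarrow> P x U"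
proof -
  obtain \<B> where \<B>: "countable \<B>" "\<forall>V\<in>\<B>. openin X V"
    "\<forall>U x. openin X U \<and> x \<in> U \<longrightarrow> (\<exists>V\<in>\<B>. x \<in> V \<and> V \<subseteq> U)"
    using countable_base unfolding second_countable_def by blast
  define G where "G U = \<Union>{W. openin X W \<and> (\<forall>x\<in>W. P x U)}" for U
  have G_dense_open: "openin X (G U) \<and> X closure_of G U = topspace X"
    if "U \<in> \<B> - {{}}" for U
  proof
    show "openin X (G U)"
      unfolding G_def by (rule openin_Union) auto
    show "X closure_of G U = topspace X"
      unfolding dense_intersects_open
    proof (intro allI impI)
      fix V assume "openin X V \<and> V \<noteq> {}"
      moreover have "openin X U" "U \<noteq> {}"
        using \<B>(2) that by auto
      ultimately obtain W where "openin X W" "W \<noteq> {}" "W \<subseteq> V" "\<forall>x\<in>W. P x U"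
        using reach by meson
      then show "G U \<inter> V \<noteq> {}"
        unfolding G_def by blast
    qed
  qed
  have "X closure_of \<Inter>(G ` (\<B> - {{}})) = topspace X"
  proof (rule Baire_category)
    show "countable (G ` (\<B> - {{}}))"
      using \<B>(1) by simp
    show "openin X T \<and> X closure_of T = topspace X" if "T \<in> G ` (\<B> - {{}})" for T
      using that G_dense_open by auto
  qed (simp add: complete)
  then have "topspace X \<inter> \<Inter>(G ` (\<B> - {{}})) \<noteq> {}"
    by (metis closure_of_restrict closure_of_empty nonempty)
  then obtain x where x: "x \<in> topspace X" "\<And>V. V \<in> \<B> - {{}} \<Longrightarrow> x \<in> G V"
    by blast
  have "P x U" if "openin X U" "U \<noteq> {}" for U
  proof -
    obtain V where "V \<in> \<B>" "V \<noteq> {}" "V \<subseteq> U"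
      using \<B>(3) \<open>openin X U\<close> \<open>U \<noteq> {}\<close> by blast
    moreover from this have "P x V"
      using x(2)[of V] unfolding G_def by blast
    ultimately show "P x U"
      using mono by blast
  qed
  with x(1) show ?thesis by blast
qed

lemma M_diskcyclicI:
  assumes "complex_scaling sc"
    and reach: "\<And>U. openin (top_of_set M) U \<Longrightarrow> U \<noteq> {} \<Longrightarrow>
                  \<exists>n \<alpha>. 1 \<le> cmod \<alpha> \<and> (T ^^ n) x \<in> sc \<alpha> ` U"
  shows "M_diskcyclic sc M T"
proof -
  let ?S = "{sc \<alpha> ((T ^^ n) x) | \<alpha> n. cmod \<alpha> \<le> 1}"
  have sc: "\<And>a b y. sc a (sc b y) = sc (a * b) y" "\<And>y. sc 1 y = y"
    using assms(1) unfolding complex_scaling_def by auto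
  have "y \<in> closure (?S \<inter> M)" if "y \<in> M" for y
    unfolding closure_approachable
  proof (intro allI impI)
    fix e :: real assume "e > 0"
    then have "openin (top_of_set M) (M \<inter> ball y e)" "M \<inter> ball y e \<noteq> {}"
      using \<open>y \<in> M\<close> by auto
    then obtain n \<alpha> u where \<alpha>: "1 \<le> cmod \<alpha>" and u: "u \<in> M \<inter> ball y e" "(T ^^ n) x = sc \<alpha> u"
      using reach by blast
    have "sc (1/\<alpha>) ((T ^^ n) x) = u"
      using u(2) \<alpha> sc by auto
    moreover have "cmod (1/\<alpha>) \<le> 1"
      using \<alpha> by (simp add: norm_divide divide_le_eq_1)
    ultimately have "u \<in> ?S" by blast
    with u(1) show "\<exists>z\<in>?S \<inter> M. dist z y < e"
      by (auto simp: dist_commute)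
  qed
  then show ?thesis
    unfolding M_diskcyclic_def by blast
qed

lemma M_disk_transitive_reaching_open:
  assumes "M_disk_transitive sc M T"
    and "openin (top_of_set M) U" "U \<noteq> {}" "openin (top_of_set M) V" "V \<noteq> {}"
  shows "\<exists>W. openin (top_of_set M) W \<and> W \<noteq> {} \<and> W \<subseteq> V \<and>
           (\<forall>x\<in>W. \<exists>n \<alpha>. 1 \<le> cmod \<alpha> \<and> (T ^^ n) x \<in> sc \<alpha> ` U)"
proof -
  have UV: "openin (top_of_set M) U \<and> U \<noteq> {} \<and> openin (top_of_set M) V \<and> V \<noteq> {}"
    using assms(2-5) by blast
  obtain n \<alpha> W where \<alpha>: "1 \<le> cmod \<alpha>" and W: "openin (top_of_set M) W" "W \<noteq> {}"
    "W \<subseteq> (T ^^ n) -` (sc \<alpha> ` U) \<inter> V"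
    using assms(1)[unfolded M_disk_transitive_def, rule_format, OF UV] by auto
  have "\<forall>x\<in>W. \<exists>n \<alpha>. 1 \<le> cmod \<alpha> \<and> (T ^^ n) x \<in> sc \<alpha> ` U"
  proof
    fix x assume "x \<in> W"
    then have "(T ^^ n) x \<in> sc \<alpha> ` U"
      using W(3) by blast
    with \<alpha> show "\<exists>n \<alpha>. 1 \<le> cmod \<alpha> \<and> (T ^^ n) x \<in> sc \<alpha> ` U"
      by blast
  qed
  moreover have "W \<subseteq> V"
    using W(3) by blast
  ultimately show ?thesis
    using W(1,2) by blast
qed

theorem mainTheorem5:
  fixes sc :: "complex \<Rightarrow> 'a::banach \<Rightarrow> 'a"
    and T :: "'a \<Rightarrow> 'a"
    and M :: "'a set"
  assumes "complex_scaling sc"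
    and "separable_type TYPE('a)"
    and "infinite_dimensional_c sc"
    and "bounded_clinear sc T"
    and "closed_csubspace sc M"
    and "M \<noteq> {0}" and "M \<noteq> UNIV"
    and "M_disk_transitive sc M T"
  shows "M_diskcyclic sc M T"
proof -
  define reaches where "reaches x U \<longleftrightarrow> (\<exists>n \<alpha>. 1 \<le> cmod \<alpha> \<and> (T ^^ n) x \<in> sc \<alpha> ` U)" for x U
  have "closed M" "0 \<in> M"
    using assms(5) unfolding closed_csubspace_def by auto
  then have complete: "completely_metrizable_space (top_of_set M)"
    by (simp add: completely_metrizable_space_closedin completely_metrizable_space_euclidean)
  obtain D :: "'a set" where "countable D" "closure D = UNIV"
    using assms(2) unfolding separable_type_def by blast
  then have countable_base: "second_countable (top_of_set M)"
    by (rule second_countable_subtopology[OF second_countable_euclidean_if_countable_dense])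
  have nonempty: "topspace (top_of_set M) \<noteq> {}"
    using \<open>0 \<in> M\<close> by auto
  have mono: "reaches x U'" if "reaches x U" "U \<subseteq> U'" for x U U'
    using that(1) image_mono[OF that(2)] unfolding reaches_def by (meson subsetD)
  have reach: "\<exists>W. openin (top_of_set M) W \<and> W \<noteq> {} \<and> W \<subseteq> V \<and> (\<forall>x\<in>W. reaches x U)"
    if "openin (top_of_set M) U" "U \<noteq> {}" "openin (top_of_set M) V" "V \<noteq> {}" for U V
    using M_disk_transitive_reaching_open[OF assms(8) that] unfolding reaches_def .
  have "\<exists>x\<in>topspace (top_of_set M). \<forall>U. openin (top_of_set M) U \<and> U \<noteq> {} \<longrightarrow> reaches x U"
    using complete countable_base nonempty mono reach by (rule Baire_point_reaching_all_open)
  then obtain x where "\<forall>U. openin (top_of_set M) U \<and> U \<noteq> {} \<longrightarrow> reaches x U"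
    by blast
  then show ?thesis
    unfolding reaches_def by (intro M_diskcyclicI[OF assms(1)]) blast
qed

end
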